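(* Let $m\ge1$ and let $v_1,\ldots,v_n$ be vectors in $\mathbb{R}^d$ ($d\ge2$), not all zero, with $m$-weights $w_j=\|v_j\|^m/\sum_\ell\|v_\ell\|^m$. Then $$\sum_{j=1}^n\sum_{k=1}^n\langle v_j,v_k\rangle^m\ \ge\ b_m(\mathbb{R}^d)\Bigl(\sum_{\ell=1}^n\|v_\ell\|^m\Bigr)^2,$$ with equality if and only if $(v_j)$ gives a weighted spherical half-design of order $m$. Moreover, $(v_j)$ gives a weighted spherical $m$-design if and only if, in addition, there is equality in $$\sum_{j=1}^n\sum_{k=1}^n\|v_j\|\|v_k\|\langle v_j,v_k\rangle^{m-1}\ \ge\ b_{m-1}(\mathbb{R}^d)\Bigl(\sum_{\ell=1}^n\|v_\ell\|^m\Bigr)^2.$$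
   Context: $b_m(\mathbb{R}^d)=\int_{\mathbb{S}}\int_{\mathbb{S}}\langle x,y\rangle^m d\sigma(x)d\sigma(y)$ ($\sigma$ normalised surface measure on the unit sphere $\mathbb{S}$), equal to $0$ for $m$ odd and $\frac{1\cdot3\cdots(m-1)}{d(d+2)\cdots(d+m-2)}$ for $m$ even, with $b_0=1$. "$(v_j)$ gives a weighted design for $P$" means that the points $v_j/\|v_j\|$ (for $v_j\neq0$; zero vectors have weight $0$) with the $m$-weights $w_j$ satisfy $\int_{\mathbb{S}}p\,d\sigma=\sum_jw_jp(v_j/\|v_j\|)$ for all $p\in P$. A half-design of order $m$ uses $P=\operatorname{Hom}_m(\mathbb{R}^d)$ (homogeneous polynomials of degree $m$); an $m$-design uses $P=$ all polynomials of degree $\le m$. *)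

theory Defs
  imports "HOL-Analysis.Analysis" "HOL-Probability.Probability"
begin

text \<open>Normalised surface measure on the unit sphere of real^'n, realised as the
  cone measure: push forward of the normalised Lebesgue measure on the unit ball
  under radial projection x \<mapsto> x / |x|.\<close>
definition sphere_sigma :: "(real^'n::finite) measure" where
  "sphere_sigma = distr (uniform_measure lborel (ball 0 1)) borel (\<lambda>x. x /\<^sub>R norm x)"

definition bm :: "'n::finite itself \<Rightarrow> nat \<Rightarrow> real" where
  "bm _ m = (\<integral>x. (\<integral>y. (x \<bullet> y) ^ m \<partial>(sphere_sigma :: (real^'n) measure)) \<partial>(sphere_sigma :: (real^'n) measure))"

definition monomial :: "('n::finite \<Rightarrow> nat) \<Rightarrow> real^'n \<Rightarrow> real" where
  "monomial \<alpha> x = (\<Prod>i\<in>UNIV. (x $ i) ^ (\<alpha> i))"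

definition hom_polys :: "nat \<Rightarrow> (real^'n::finite \<Rightarrow> real) set" where
  "hom_polys m = {p. \<exists>(c :: ('n \<Rightarrow> nat) \<Rightarrow> real) A. finite A \<and> (\<forall>\<alpha>\<in>A. sum \<alpha> UNIV = m)
                       \<and> p = (\<lambda>x. \<Sum>\<alpha>\<in>A. c \<alpha> * monomial \<alpha> x)}"

definition polys_upto :: "nat \<Rightarrow> (real^'n::finite \<Rightarrow> real) set" where
  "polys_upto m = {p. \<exists>(c :: ('n \<Rightarrow> nat) \<Rightarrow> real) A. finite A \<and> (\<forall>\<alpha>\<in>A. sum \<alpha> UNIV \<le> m)
                       \<and> p = (\<lambda>x. \<Sum>\<alpha>\<in>A. c \<alpha> * monomial \<alpha> x)}"

definition mweight :: "nat \<Rightarrow> (nat \<Rightarrow> real^'n::finite) \<Rightarrow> nat \<Rightarrow> nat \<Rightarrow> real" where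
  "mweight m v n j = norm (v j) ^ m / (\<Sum>l<n. norm (v l) ^ m)"

text \<open>(v_j) gives a weighted design for P (zero vectors get weight 0).\<close>
definition weighted_design :: "nat \<Rightarrow> (nat \<Rightarrow> real^'n::finite) \<Rightarrow> nat \<Rightarrow> (real^'n \<Rightarrow> real) set \<Rightarrow> bool" where
  "weighted_design m v n P \<longleftrightarrow>
     (\<forall>p\<in>P. (\<integral>x. p x \<partial>sphere_sigma) =
        (\<Sum>j\<in>{j. j < n \<and> v j \<noteq> 0}. mweight m v n j * p (v j /\<^sub>R norm (v j))))"

end

theory Submission
  imports Defs
begin

(* Write v_j = |v_j| u_j with unit vectors u_j; both double sums of the theorem are
   (\<Sum>_l |v_l|^m)^2 times \<Sum>_j \<Sum>_l w_j w_l (u_j \<bullet> u_l)^k, for k = m and k = m - 1.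
   Expand (x \<bullet> y)^k = \<Sum>_f p_f(x) p_f(y) over words f of length k in the coordinates, where
   p_f(x) = x_(f 0) \<dots> x_(f (k - 1)).  The orthogonal invariance of \<sigma> makes
   \<integral> (u \<bullet> y)^k d\<sigma>(y) = b_k for every unit vector u, and therefore
     \<Sum>_j \<Sum>_l w_j w_l (u_j \<bullet> u_l)^k - b_k = \<Sum>_f (\<Sum>_j w_j p_f(u_j) - \<integral> p_f d\<sigma>)^2.
   This gives the inequality, with equality iff the weighted points (u_j, w_j) integrate every
   monomial of degree k exactly, i.e. all of Hom_k.  Finally, x^\<alpha> = x^\<alpha> |x|^(2r) on the
   sphere, so exactness on Hom_m and Hom_(m-1) gives exactness on all monomials of degree <= m. *)

(* The library proves the invariance of Lebesgue measure under orthogonal maps only for index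
   types of sort wellorder; this copy of {..<CARD('n)} transfers it to any finite index type. *)
typedef ('n::finite) ordered_index = "{..<CARD('n)}"
  by (intro exI[of _ 0]) simp

lemma card_ordered_index: "CARD('n::finite ordered_index) = CARD('n)"
  by (simp add: type_definition.card[OF type_definition_ordered_index])

instance ordered_index :: (finite) finite
proof
  show "finite (UNIV :: 'a ordered_index set)"
    by (metis type_definition.Abs_image[OF type_definition_ordered_index]
        finite_imageI finite_lessThan)
qed

instantiation ordered_index :: (finite) wellorder
begin

definition "x \<le> y \<longleftrightarrow> Rep_ordered_index x \<le> Rep_ordered_index y"
definition "x < y \<longleftrightarrow> Rep_ordered_index x < Rep_ordered_index y"

instance
proof
  fix P :: "'a ordered_index \<Rightarrow> bool" and a
  assume step: "\<And>x. (\<And>y. y < x \<Longrightarrow> P y) \<Longrightarrow> P x"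
  show "P a"
  proof (induction a rule: measure_induct_rule[of Rep_ordered_index])
    case (less x)
    then show ?case
      by (rule step) (simp add: less_ordered_index_def)
  qed
next
  fix x y :: "'a ordered_index"
  show "x \<le> y \<Longrightarrow> y \<le> x \<Longrightarrow> x = y"
    by (simp add: less_eq_ordered_index_def Rep_ordered_index_inject[symmetric])
qed (simp_all add: less_eq_ordered_index_def less_ordered_index_def less_le_not_le linear)

end

lemma prod_Basis_cart:
  fixes g :: "real^'n::finite \<Rightarrow> 'a::comm_monoid_mult"
  shows "(\<Prod>b\<in>Basis. g b) = (\<Prod>i\<in>UNIV. g (axis i 1))"
proof -
  have "Basis = range (\<lambda>i::'n. axis i (1::real))"
    by (auto simp: Basis_vec_def)
  moreover have "inj (\<lambda>i::'n. axis i (1::real))"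
    by (auto simp: inj_def axis_eq_axis)
  ultimately show ?thesis
    by (simp add: prod.reindex_cong[of "\<lambda>i. axis i 1"])
qed

lemma distr_lborel_reindex:
  fixes r :: "'m::finite \<Rightarrow> 'n::finite"
  assumes "bij r"
  shows "distr lborel borel (\<lambda>x::real^'n. \<chi> i. x $ r i) = (lborel :: (real^'m) measure)"
proof (rule lborel_eqI[symmetric])
  fix l u :: "real^'m"
  assume lu: "\<And>b. b \<in> Basis \<Longrightarrow> l \<bullet> b \<le> u \<bullet> b"
  let ?T = "\<lambda>x::real^'n. \<chi> i. x $ r i"
  let ?s = "inv r"
  let ?back = "\<lambda>x::real^'m. \<chi> j. x $ ?s j"
  have meas: "?T \<in> borel_measurable borel"
    by (intro borel_measurable_continuous_onI continuous_intros)
  have lu': "l $ i \<le> u $ i" for i using lu[of "axis i 1"] by (simp add: inner_axis)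
  have rs: "r (?s j) = j" and sr: "?s (r i) = i" for i j
    using assms by (simp_all add: bij_is_surj bij_is_inj surj_f_inv_f inv_f_f)
  have "?T -` box l u = box (?back l) (?back u)"
    by (auto simp: mem_box_cart) (metis rs sr)+
  then have "emeasure (distr lborel borel ?T) (box l u) = emeasure lborel (box (?back l) (?back u))"
    by (simp add: emeasure_distr meas)
  also have "\<dots> = (\<Prod>j\<in>UNIV. u $ ?s j - l $ ?s j)"
    using lu' by (subst emeasure_lborel_box)
      (auto simp: prod_Basis_cart inner_axis dest!: axis_inverse)
  also have "\<dots> = (\<Prod>i\<in>UNIV. u $ i - l $ i)"
    using prod.reindex_bij_betw[OF bij_betw_inv_into[OF assms], of "\<lambda>i. u $ i - l $ i"] by simp
  also have "\<dots> = (\<Prod>b\<in>Basis. (u - l) \<bullet> b)"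
    by (simp add: prod_Basis_cart inner_axis)
  finally show "emeasure (distr lborel borel ?T) (box l u) = (\<Prod>b\<in>Basis. (u - l) \<bullet> b)" .
qed simp

lemma inner_reindex_vec:
  fixes r :: "'m::finite \<Rightarrow> 'n::finite"
  assumes "bij r"
  shows "(\<chi> i. x $ r i) \<bullet> (\<chi> i. y $ r i) = x \<bullet> y"
  using sum.reindex_bij_betw[OF assms, of "\<lambda>j. x $ j \<bullet> y $ j"] by (simp add: inner_vec_def)

lemma emeasure_lborel_bounded:
  fixes X :: "'a::euclidean_space set"
  assumes "X \<in> sets borel" "bounded X"
  shows "emeasure lborel X = ennreal (measure lebesgue X)"
  using assms emeasure_bounded_finite[of X] by (simp add: emeasure_eq_ennreal_measure)

lemma orthogonal_transformation_borel_measurable: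
  fixes f :: "'a::euclidean_space \<Rightarrow> 'a"
  assumes "orthogonal_transformation f"
  shows "f \<in> borel_measurable borel"
proof -
  have "linear f"
    using assms by (rule orthogonal_transformation_linear)
  then show ?thesis
    by (intro borel_measurable_continuous_onI linear_continuous_on)
      (simp add: linear_conv_bounded_linear[symmetric])
qed

lemma distr_lborel_orthogonal_wellorder:
  fixes f :: "real^'n::{finite,wellorder} \<Rightarrow> real^'n::_"
  assumes f: "orthogonal_transformation f"
  shows "distr lborel borel f = lborel"
proof (rule lborel_eqI[symmetric])
  note f_meas = orthogonal_transformation_borel_measurable[OF f]
  fix l u :: "real^'n::_"
  assume lu: "\<And>b. b \<in> Basis \<Longrightarrow> l \<bullet> b \<le> u \<bullet> b"
  have pre: "f -` box l u = inv f ` box l u"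
    using orthogonal_transformation_bij[OF f] by (simp add: bij_vimage_eq_inv_image)
  have "bounded (inv f ` box l u)"
    using orthogonal_transformation_inv[OF f]
    by (intro bounded_linear_image)
      (simp_all add: orthogonal_transformation_linear flip: linear_conv_bounded_linear)
  moreover have "inv f ` box l u \<in> sets borel"
    using measurable_sets_borel[OF f_meas, of "box l u"] by (simp add: pre)
  ultimately have "emeasure (distr lborel borel f) (box l u)
      = ennreal (measure lebesgue (inv f ` box l u))"
    by (simp add: emeasure_distr f_meas pre emeasure_lborel_bounded)
  also have "\<dots> = ennreal (measure lebesgue (box l u))"
    by (simp add: measure_orthogonal_image[OF orthogonal_transformation_inv[OF f]])
  also have "\<dots> = (\<Prod>b\<in>Basis. (u - l) \<bullet> b)"
    using lu by (simp flip: emeasure_lborel_bounded)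
  finally show "emeasure (distr lborel borel f) (box l u) = (\<Prod>b\<in>Basis. (u - l) \<bullet> b)" .
qed simp

lemma distr_lborel_orthogonal:
  fixes f :: "real^'n::finite \<Rightarrow> real^'n"
  assumes f: "orthogonal_transformation f"
  shows "distr lborel borel f = lborel"
proof -
  obtain r :: "'n ordered_index \<Rightarrow> 'n" where r: "bij r"
    using finite_same_card_bij[of "UNIV :: 'n ordered_index set" "UNIV :: 'n set"]
    by (auto simp: card_ordered_index)
  define T :: "real^'n \<Rightarrow> real^'n ordered_index" where "T x = (\<chi> i. x $ r i)" for x
  define S :: "real^'n ordered_index \<Rightarrow> real^'n" where "S y = (\<chi> j. y $ inv r j)" for y
  have ST: "S (T x) = x" for x
    using r by (simp add: T_def S_def vec_eq_iff bij_is_surj surj_f_inv_f)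
  have distr_T: "distr lborel borel T = lborel" and distr_S: "distr lborel borel S = lborel"
    unfolding T_def S_def using r by (simp_all add: distr_lborel_reindex bij_imp_bij_inv)
  define g where "g = T \<circ> f \<circ> S"
  have T_meas: "T \<in> borel_measurable borel" and S_meas: "S \<in> borel_measurable borel"
    unfolding T_def S_def by (intro borel_measurable_continuous_onI continuous_intros)+
  have "linear T" "linear S"
    unfolding T_def S_def by (auto intro!: linearI simp: vec_eq_iff)
  then have "linear g"
    unfolding g_def using orthogonal_transformation_linear[OF f] by (intro linear_compose)
  moreover have "T x \<bullet> T y = x \<bullet> y" "S x' \<bullet> S y' = x' \<bullet> y'" for x y x' y'
    unfolding T_def S_def using r by (simp_all add: inner_reindex_vec bij_imp_bij_inv)
  ultimately have g: "orthogonal_transformation g"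
    using f by (simp add: g_def orthogonal_transformation_def)
  have "f = S \<circ> g \<circ> T"
    using ST by (simp add: g_def fun_eq_iff)
  then have "distr lborel borel f = distr (distr (distr lborel borel T) borel g) borel S"
    using T_meas S_meas orthogonal_transformation_borel_measurable[OF g]
    by (simp add: distr_distr o_assoc)
  also have "\<dots> = lborel"
    by (simp add: distr_T distr_S distr_lborel_orthogonal_wellorder[OF g])
  finally show ?thesis .
qed

lemma distr_uniform_measure_invariant:
  assumes H: "H \<in> measurable M M" and inv: "distr M M H = M"
    and A: "A \<in> sets M" "H -` A \<inter> space M = A"
  shows "distr (uniform_measure M A) M H = uniform_measure M A"
proof (rule measure_eqI)
  fix B assume "B \<in> sets (distr (uniform_measure M A) M H)"
  then have B: "B \<in> sets M" by simp
  have H_U: "H \<in> measurable (uniform_measure M A) M"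
    using H by (simp cong: measurable_cong_sets)
  have "H -` B \<inter> space M \<inter> A = H -` (B \<inter> A) \<inter> space M"
    using A(2) by blast
  moreover have "emeasure M (H -` (B \<inter> A) \<inter> space M) = emeasure M (B \<inter> A)"
    using emeasure_distr[OF H, of "B \<inter> A"] A B by (simp add: inv)
  ultimately show "emeasure (distr (uniform_measure M A) M H) B = emeasure (uniform_measure M A) B"
    using A B H by (simp add: emeasure_distr[OF H_U] measurable_sets Int_commute)
qed simp

lemma sets_sphere_sigma [simp, measurable_cong]:
  "sets (sphere_sigma :: (real^'n::finite) measure) = sets borel"
  by (simp add: sphere_sigma_def)

lemma space_sphere_sigma [simp]: "space (sphere_sigma :: (real^'n::finite) measure) = UNIV"
  by (simp add: sphere_sigma_def)

lemma prob_space_sphere_sigma: "prob_space (sphere_sigma :: (real^'n::finite) measure)"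
proof -
  have "emeasure lborel (ball (0::real^'n) 1) \<noteq> 0"
    using content_ball_pos[of 1 "0::real^'n"] by (auto simp: measure_def)
  then have "prob_space (uniform_measure lborel (ball (0::real^'n) 1))"
    using emeasure_lborel_ball_finite[of "0::real^'n" 1] by (intro prob_space_uniform_measure) auto
  then show ?thesis
    unfolding sphere_sigma_def by (rule prob_space.prob_space_distr) measurable
qed

lemma AE_sphere_sigma_norm: "AE y in (sphere_sigma :: (real^'n::finite) measure). norm y = 1"
proof -
  have "AE x in uniform_measure lborel (ball (0::real^'n) 1). x \<noteq> 0"
    by (rule AE_uniform_measureI) (auto intro: AE_lborel_singleton[THEN AE_mp])
  then have "AE x in uniform_measure lborel (ball (0::real^'n) 1). norm (x /\<^sub>R norm x) = 1"
    by eventually_elim simp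
  then show ?thesis
    unfolding sphere_sigma_def by (subst AE_distr_iff) auto
qed

lemma integrable_sphere_sigma_bounded:
  fixes g :: "real^'n::finite \<Rightarrow> real"
  assumes [measurable]: "g \<in> borel_measurable borel"
    and bound: "\<And>y. norm y = 1 \<Longrightarrow> \<bar>g y\<bar> \<le> B"
  shows "integrable sphere_sigma g"
proof -
  interpret prob_space "sphere_sigma :: (real^'n) measure"
    by (rule prob_space_sphere_sigma)
  show ?thesis
  proof (rule integrable_const_bound[where B = B])
    show "AE x in sphere_sigma. norm (g x) \<le> B"
      using AE_sphere_sigma_norm by eventually_elim (simp add: bound)
  qed simp
qed

lemma distr_sphere_sigma_orthogonal:
  fixes H :: "real^'n::finite \<Rightarrow> real^'n"
  assumes H: "orthogonal_transformation H"
  shows "distr sphere_sigma borel H = sphere_sigma"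
proof -
  note H_meas [measurable] = orthogonal_transformation_borel_measurable[OF H]
  have H_norm: "norm (H y) = norm y" for y
    using H orthogonal_transformation_norm by blast
  have "H -` ball 0 1 = ball 0 1"
    by (auto simp: H_norm)
  moreover have "distr lborel lborel H = lborel"
    using distr_lborel_orthogonal[OF H] by (simp cong: distr_cong)
  ultimately have U:
    "distr (uniform_measure lborel (ball 0 1)) borel H = uniform_measure lborel (ball 0 1)"
    using distr_uniform_measure_invariant[of H lborel "ball 0 1"] by (simp cong: distr_cong)
  have "distr sphere_sigma borel H
      = distr (uniform_measure lborel (ball 0 1)) borel (H \<circ> (\<lambda>x. x /\<^sub>R norm x))"
    unfolding sphere_sigma_def by (simp add: distr_distr)
  also have "H \<circ> (\<lambda>x. x /\<^sub>R norm x) = (\<lambda>x. x /\<^sub>R norm x) \<circ> H"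
    using H_norm linear_scale[OF orthogonal_transformation_linear[OF H]] by (simp add: fun_eq_iff)
  also have "distr (uniform_measure lborel (ball 0 1)) borel ((\<lambda>x. x /\<^sub>R norm x) \<circ> H)
      = distr (distr (uniform_measure lborel (ball 0 1)) borel H) borel (\<lambda>x. x /\<^sub>R norm x)"
    by (simp add: distr_distr)
  also have "\<dots> = sphere_sigma"
    by (simp add: U sphere_sigma_def)
  finally show ?thesis .
qed

lemma integral_sphere_sigma_orthogonal:
  fixes H :: "real^'n::finite \<Rightarrow> real^'n" and g :: "real^'n \<Rightarrow> real"
  assumes H: "orthogonal_transformation H" and g: "g \<in> borel_measurable borel"
  shows "(\<integral>y. g (H y) \<partial>sphere_sigma) = (\<integral>y. g y \<partial>sphere_sigma)"
proof -
  have "H \<in> measurable sphere_sigma borel"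
    using orthogonal_transformation_borel_measurable[OF H] by (simp cong: measurable_cong_sets)
  from integral_distr[OF this g] show ?thesis
    by (simp add: distr_sphere_sigma_orthogonal[OF H])
qed

lemma integral_inner_power_sphere_sigma_norm_eq:
  fixes u u' :: "real^'n::finite"
  assumes "norm u = norm u'"
  shows "(\<integral>y. (u \<bullet> y) ^ k \<partial>sphere_sigma) = (\<integral>y. (u' \<bullet> y) ^ k \<partial>sphere_sigma)"
proof -
  obtain H where H: "orthogonal_transformation H" and Hu: "H u' = u"
    using orthogonal_transformation_exists[of u' u] assms by metis
  have "u \<bullet> H y = u' \<bullet> y" for y
    using H Hu by (auto simp: orthogonal_transformation_def)
  then show ?thesis
    using integral_sphere_sigma_orthogonal[OF H, of "\<lambda>y. (u \<bullet> y) ^ k"] by simp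
qed

lemma integral_inner_power_sphere_sigma:
  fixes u :: "real^'n::finite"
  assumes "norm u = 1"
  shows "(\<integral>y. (u \<bullet> y) ^ k \<partial>sphere_sigma) = bm TYPE('n) k"
proof -
  let ?c = "\<integral>y. (u \<bullet> y) ^ k \<partial>sphere_sigma"
  have const: "(\<integral>y. (x \<bullet> y) ^ k \<partial>sphere_sigma) = ?c" if "norm x = 1" for x :: "real^'n"
    using integral_inner_power_sphere_sigma_norm_eq[of x u k] that assms by simp
  interpret prob_space "sphere_sigma :: (real^'n) measure"
    by (rule prob_space_sphere_sigma)
  have "bm TYPE('n) k = (\<integral>x. (\<integral>y. (x \<bullet> y) ^ k \<partial>sphere_sigma) \<partial>(sphere_sigma :: (real^'n) measure))"
    by (simp add: bm_def)
  also have "\<dots> = (\<integral>x. ?c \<partial>(sphere_sigma :: (real^'n) measure))"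
  proof (rule integral_cong_AE)
    show "AE x in (sphere_sigma :: (real^'n) measure). (\<integral>y. (x \<bullet> y) ^ k \<partial>sphere_sigma) = ?c"
      using AE_sphere_sigma_norm
      by eventually_elim (rule const)
    show "(\<lambda>x. \<integral>y. (x \<bullet> y) ^ k \<partial>sphere_sigma)
        \<in> borel_measurable (sphere_sigma :: (real^'n) measure)"
      by measurable
  qed simp
  also have "\<dots> = ?c"
    using prob_space by simp
  finally show ?thesis
    by simp
qed

definition words :: "nat \<Rightarrow> (nat \<Rightarrow> 'n::finite) set" where
  "words k = PiE {..<k} (\<lambda>_. UNIV)"

definition word_monomial :: "nat \<Rightarrow> (nat \<Rightarrow> 'n::finite) \<Rightarrow> real^'n \<Rightarrow> real" where
  "word_monomial k f x = (\<Prod>t<k. x $ f t)"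

lemma finite_words [simp]: "finite (words k :: (nat \<Rightarrow> 'n::finite) set)"
  by (simp add: words_def finite_PiE)

lemma inner_power_eq_sum_words:
  fixes x y :: "real^'n::finite"
  shows "(x \<bullet> y) ^ k = (\<Sum>f\<in>words k. word_monomial k f x * word_monomial k f y)"
proof -
  have "(x \<bullet> y) ^ k = (\<Prod>t<k. \<Sum>i\<in>UNIV. x $ i * y $ i)"
    by (simp add: inner_vec_def)
  also have "\<dots> = (\<Sum>f\<in>words k. \<Prod>t<k. x $ f t * y $ f t)"
    using prod_sum_PiE[of "{..<k}" "\<lambda>_. UNIV" "\<lambda>t i. x $ i * y $ i"] by (simp add: words_def)
  finally show ?thesis
    by (simp add: word_monomial_def prod.distrib)
qed

definition word_append :: "nat \<Rightarrow> (nat \<Rightarrow> 'a) \<Rightarrow> (nat \<Rightarrow> 'a) \<Rightarrow> nat \<Rightarrow> 'a" where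
  "word_append a f g t = (if t < a then f t else g (t - a))"

lemma word_monomial_append:
  "word_monomial (a + b) (word_append a f g) x = word_monomial a f x * word_monomial b g x"
  by (induction b) (simp_all add: word_monomial_def word_append_def)

lemma monomial_add_axis:
  "monomial (\<lambda>i. \<beta> i + (if i = a then 1 else 0)) x = monomial \<beta> x * x $ a"
proof -
  have "(\<Prod>i\<in>UNIV. x $ i ^ (if i = a then 1 else 0)) = x $ a"
    by (subst prod.cong[OF refl, of _ _ "\<lambda>i. if i = a then x $ a else 1"]) auto
  then show ?thesis
    by (simp add: monomial_def power_add prod.distrib)
qed

lemma word_monomial_Suc: "word_monomial (Suc k) f x = word_monomial k f x * x $ f k"
  by (simp add: word_monomial_def)

lemma word_monomial_eq_monomial:
  fixes f :: "nat \<Rightarrow> 'n::finite"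
  shows "\<exists>\<beta>. sum \<beta> UNIV = k \<and> word_monomial k f = monomial \<beta>"
proof (induction k)
  case 0
  show ?case
    by (rule exI[of _ "\<lambda>_. 0"]) (simp add: word_monomial_def monomial_def fun_eq_iff)
next
  case (Suc k)
  then obtain \<beta> where "sum \<beta> UNIV = k" "word_monomial k f = monomial \<beta>"
    by blast
  then show ?case
    by (intro exI[of _ "\<lambda>i. \<beta> i + (if i = f k then 1 else 0)"])
      (simp add: sum.distrib fun_eq_iff monomial_add_axis word_monomial_Suc)
qed

lemma monomial_eq_word_monomial:
  fixes \<alpha> :: "'n::finite \<Rightarrow> nat"
  assumes "sum \<alpha> UNIV = k"
  shows "\<exists>f\<in>words k. word_monomial k f = monomial \<alpha>"
  using assms
proof (induction k arbitrary: \<alpha>)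
  case 0
  then have "\<alpha> = (\<lambda>_. 0)"
    by (simp add: fun_eq_iff)
  then show ?case
    by (auto simp: words_def word_monomial_def monomial_def fun_eq_iff)
next
  case (Suc k)
  then obtain a where "\<alpha> a > 0"
    by (metis nat.distinct(1) not_gr0 sum.neutral)
  define \<alpha>' where "\<alpha>' = (\<lambda>i. if i = a then \<alpha> a - 1 else \<alpha> i)"
  have \<alpha>: "\<alpha> = (\<lambda>i. \<alpha>' i + (if i = a then 1 else 0))"
    using \<open>\<alpha> a > 0\<close> by (auto simp: \<alpha>'_def fun_eq_iff)
  then have "sum \<alpha>' UNIV = k"
    using Suc.prems by (simp add: sum.distrib)
  then obtain f where f: "f \<in> words k" "word_monomial k f = monomial \<alpha>'"
    using Suc.IH by blast
  have "word_monomial k (f(k := a)) = word_monomial k f"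
    by (simp add: word_monomial_def fun_eq_iff)
  then have "word_monomial (Suc k) (f(k := a)) = monomial \<alpha>"
    by (subst \<alpha>) (simp add: fun_eq_iff word_monomial_Suc monomial_add_axis f(2))
  moreover have "f(k := a) \<in> words (Suc k)"
    using f(1) by (auto simp: words_def PiE_def extensional_def)
  ultimately show ?case
    by blast
qed

lemma monomial_in_hom_polys: "sum \<alpha> UNIV = k \<Longrightarrow> monomial \<alpha> \<in> hom_polys k"
  unfolding hom_polys_def by (intro CollectI exI[of _ "\<lambda>_. 1"] exI[of _ "{\<alpha>}"]) auto

lemma word_monomial_in_hom_polys: "word_monomial k f \<in> hom_polys k"
  using word_monomial_eq_monomial[of k f] monomial_in_hom_polys by metis

lemma borel_measurable_monomial [measurable]: "monomial \<alpha> \<in> borel_measurable borel"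
  unfolding monomial_def by measurable

lemma borel_measurable_word_monomial [measurable]: "word_monomial k f \<in> borel_measurable borel"
  unfolding word_monomial_def by measurable

lemma abs_monomial_le_1: "norm x = 1 \<Longrightarrow> \<bar>monomial \<alpha> x\<bar> \<le> 1"
  unfolding monomial_def abs_prod power_abs
  by (intro prod_le_1) (auto intro!: power_le_one, metis component_le_norm_cart)

lemma integrable_monomial: "integrable sphere_sigma (monomial \<alpha>)"
  by (rule integrable_sphere_sigma_bounded[where B = 1]) (auto intro: abs_monomial_le_1)

lemma integrable_word_monomial: "integrable sphere_sigma (word_monomial k f)"
  using word_monomial_eq_monomial[of k f] integrable_monomial by metis

definition quadrature_exact ::
    "nat set \<Rightarrow> (nat \<Rightarrow> real^'n::finite) \<Rightarrow> (nat \<Rightarrow> real) \<Rightarrow> (real^'n \<Rightarrow> real) \<Rightarrow> bool" where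
  "quadrature_exact J u W p \<longleftrightarrow> (\<integral>x. p x \<partial>sphere_sigma) = (\<Sum>j\<in>J. W j * p (u j))"

lemma quadrature_exact_sum:
  assumes "finite A"
    and "\<And>a. a \<in> A \<Longrightarrow> integrable sphere_sigma (p a)"
    and "\<And>a. a \<in> A \<Longrightarrow> quadrature_exact J u W (p a)"
  shows "quadrature_exact J u W (\<lambda>x. \<Sum>a\<in>A. c a * p a x)"
proof -
  have "(\<integral>x. (\<Sum>a\<in>A. c a * p a x) \<partial>sphere_sigma) = (\<Sum>a\<in>A. c a * (\<integral>x. p a x \<partial>sphere_sigma))"
    using assms(2) by (simp add: Bochner_Integration.integral_sum)
  also have "\<dots> = (\<Sum>a\<in>A. c a * (\<Sum>j\<in>J. W j * p a (u j)))"
    using assms(3) by (simp add: quadrature_exact_def)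
  also have "\<dots> = (\<Sum>j\<in>J. W j * (\<Sum>a\<in>A. c a * p a (u j)))"
    by (simp add: sum_distrib_left mult_ac sum.swap[of _ A])
  finally show ?thesis
    by (simp add: quadrature_exact_def)
qed

lemma quadrature_exact_cong_sphere:
  fixes p q :: "real^'n::finite \<Rightarrow> real"
  assumes "\<And>j. j \<in> J \<Longrightarrow> norm (u j) = 1"
    and [measurable]: "p \<in> borel_measurable borel" "q \<in> borel_measurable borel"
    and "\<And>x. norm x = 1 \<Longrightarrow> p x = q x"
  shows "quadrature_exact J u W p \<longleftrightarrow> quadrature_exact J u W q"
proof -
  have "(\<integral>x. p x \<partial>sphere_sigma) = (\<integral>x. q x \<partial>sphere_sigma)"
    using AE_sphere_sigma_norm
    by (intro integral_cong_AE) (auto elim!: eventually_mono simp: assms(4))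
  moreover have "(\<Sum>j\<in>J. W j * p (u j)) = (\<Sum>j\<in>J. W j * q (u j))"
    using assms(1,4) by simp
  ultimately show ?thesis
    by (simp add: quadrature_exact_def)
qed

lemma quadrature_exact_hom_polys_iff:
  "(\<forall>p\<in>hom_polys k. quadrature_exact J u W p)
    \<longleftrightarrow> (\<forall>f\<in>words k. quadrature_exact J u W (word_monomial k f))"
proof
  assume "\<forall>f\<in>words k. quadrature_exact J u W (word_monomial k f)"
  then have monomial: "quadrature_exact J u W (monomial \<alpha>)" if "sum \<alpha> UNIV = k" for \<alpha>
    using monomial_eq_word_monomial[OF that] by metis
  show "\<forall>p\<in>hom_polys k. quadrature_exact J u W p"
    unfolding hom_polys_def by (auto intro!: quadrature_exact_sum integrable_monomial monomial)
qed (simp add: word_monomial_in_hom_polys)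

lemma quadrature_exact_polys_upto_iff:
  fixes u :: "nat \<Rightarrow> real^'n::finite"
  assumes unit: "\<And>j. j \<in> J \<Longrightarrow> norm (u j) = 1" and "m \<ge> 1"
  shows "(\<forall>p\<in>polys_upto m. quadrature_exact J u W p) \<longleftrightarrow>
    (\<forall>p\<in>hom_polys m. quadrature_exact J u W p) \<and> (\<forall>p\<in>hom_polys (m - 1). quadrature_exact J u W p)"
    (is "?upto \<longleftrightarrow> ?hom_m \<and> ?hom_m1")
proof
  assume ?upto
  moreover have "hom_polys k \<subseteq> (polys_upto m :: (real^'n \<Rightarrow> real) set)" if "k \<le> m" for k
    using that unfolding hom_polys_def polys_upto_def by fastforce
  ultimately show "?hom_m \<and> ?hom_m1"
    by (meson diff_le_self order_refl subsetD)
next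
  assume "?hom_m \<and> ?hom_m1"
  then have hom: "quadrature_exact J u W (word_monomial k f)" if "k = m \<or> k = m - 1" for k f
    using that word_monomial_in_hom_polys by blast
  have monomial: "quadrature_exact J u W (monomial \<alpha>)" if deg: "sum \<alpha> UNIV \<le> m" for \<alpha>
  proof -
    define d where "d = sum \<alpha> UNIV"
    have "\<exists>r. d + 2 * r = m \<or> d + 2 * r = m - 1"
      using deg \<open>m \<ge> 1\<close> unfolding d_def[symmetric] by presburger
    then obtain r where r: "d + 2 * r = m \<or> d + 2 * r = m - 1"
      by blast
    obtain f where f: "word_monomial d f = monomial \<alpha>"
      using monomial_eq_word_monomial[OF d_def[symmetric]] by blast
    define w where "w g = word_append d f (word_append r g g)" for g
    have "monomial \<alpha> x = (\<Sum>g\<in>words r. word_monomial (d + 2 * r) (w g) x)" if "norm x = 1" for x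
    proof -
      have "monomial \<alpha> x = monomial \<alpha> x * (x \<bullet> x) ^ r"
        using that by (simp add: dot_square_norm)
      also have "\<dots> = (\<Sum>g\<in>words r.
          word_monomial d f x * (word_monomial r g x * word_monomial r g x))"
        by (simp add: inner_power_eq_sum_words sum_distrib_left f)
      also have "\<dots> = (\<Sum>g\<in>words r. word_monomial (d + 2 * r) (w g) x)"
        by (simp add: w_def mult_2 word_monomial_append)
      finally show ?thesis .
    qed
    then have "quadrature_exact J u W (monomial \<alpha>) \<longleftrightarrow>
        quadrature_exact J u W (\<lambda>x. \<Sum>g\<in>words r. word_monomial (d + 2 * r) (w g) x)"
      using unit by (intro quadrature_exact_cong_sphere) auto
    also have "\<dots>"
      using quadrature_exact_sum[of "words r" "\<lambda>g. word_monomial (d + 2 * r) (w g)" J u W "\<lambda>_. 1"]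
      using hom[OF r] by (simp add: integrable_word_monomial)
    finally show ?thesis .
  qed
  show "\<forall>p\<in>polys_upto m. quadrature_exact J u W p"
    unfolding polys_upto_def by (auto intro!: quadrature_exact_sum integrable_monomial monomial)
qed

lemma integral_inner_power_eq_sum_words:
  fixes x :: "real^'n::finite"
  shows "(\<integral>y. (x \<bullet> y) ^ k \<partial>sphere_sigma)
    = (\<Sum>f\<in>words k. word_monomial k f x * (\<integral>y. word_monomial k f y \<partial>sphere_sigma))"
  unfolding inner_power_eq_sum_words
  by (subst Bochner_Integration.integral_sum) (auto intro: integrable_word_monomial)

lemma bm_eq_sum_squares:
  "bm TYPE('n::finite) k
    = (\<Sum>f\<in>words k. (\<integral>y. word_monomial k f y \<partial>(sphere_sigma :: (real^'n) measure))\<^sup>2)"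
proof -
  have "bm TYPE('n) k = (\<integral>x. (\<Sum>f\<in>words k. word_monomial k f x
      * (\<integral>y. word_monomial k f y \<partial>sphere_sigma)) \<partial>(sphere_sigma :: (real^'n) measure))"
    by (simp add: bm_def integral_inner_power_eq_sum_words)
  also have "\<dots> = (\<Sum>f\<in>words k. (\<integral>y. word_monomial k f y \<partial>(sphere_sigma :: (real^'n) measure))\<^sup>2)"
    by (subst Bochner_Integration.integral_sum)
      (auto intro: integrable_word_monomial simp: power2_eq_square)
  finally show ?thesis .
qed

lemma weighted_gram_sum_minus_bm:
  fixes u :: "nat \<Rightarrow> real^'n::finite"
  assumes unit: "\<And>j. j \<in> J \<Longrightarrow> norm (u j) = 1" and W: "(\<Sum>j\<in>J. W j) = 1"
  shows "(\<Sum>j\<in>J. \<Sum>l\<in>J. W j * W l * (u j \<bullet> u l) ^ k) - bm TYPE('n) k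
    = (\<Sum>f\<in>words k.
        ((\<Sum>j\<in>J. W j * word_monomial k f (u j)) - (\<integral>y. word_monomial k f y \<partial>sphere_sigma))\<^sup>2)"
proof -
  define a where "a f = (\<Sum>j\<in>J. W j * word_monomial k f (u j))" for f
  define c where "c f = (\<integral>y. word_monomial k f y \<partial>(sphere_sigma :: (real^'n) measure))" for f
  have "(\<Sum>f\<in>words k. (a f - c f)\<^sup>2)
      = (\<Sum>f\<in>words k. (a f)\<^sup>2) - 2 * (\<Sum>f\<in>words k. a f * c f) + (\<Sum>f\<in>words k. (c f)\<^sup>2)"
    by (simp add: power2_diff sum.distrib sum_subtractf sum_distrib_left mult_ac)
  moreover have "(\<Sum>f\<in>words k. (a f)\<^sup>2) = (\<Sum>j\<in>J. \<Sum>l\<in>J. W j * W l * (u j \<bullet> u l) ^ k)"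
    by (simp add: a_def power2_eq_square sum_product inner_power_eq_sum_words sum_distrib_left
        sum.swap[of _ "words k"] mult_ac)
  moreover have "(\<Sum>f\<in>words k. a f * c f) = bm TYPE('n) k"
  proof -
    have "(\<Sum>f\<in>words k. a f * c f) = (\<Sum>j\<in>J. W j * (\<integral>y. (u j \<bullet> y) ^ k \<partial>sphere_sigma))"
      by (simp add: a_def c_def integral_inner_power_eq_sum_words sum_distrib_left sum_distrib_right
          sum.swap[of _ "words k"] mult_ac)
    also have "\<dots> = (\<Sum>j\<in>J. W j) * bm TYPE('n) k"
      by (simp add: unit integral_inner_power_sphere_sigma sum_distrib_right)
    finally show ?thesis
      by (simp add: W)
  qed
  moreover have "(\<Sum>f\<in>words k. (c f)\<^sup>2) = bm TYPE('n) k"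
    by (simp add: c_def bm_eq_sum_squares)
  ultimately show ?thesis
    unfolding a_def[symmetric] c_def[symmetric] by linarith
qed

lemma weighted_gram_sum_ge_bm:
  fixes u :: "nat \<Rightarrow> real^'n::finite"
  assumes "\<And>j. j \<in> J \<Longrightarrow> norm (u j) = 1" and "(\<Sum>j\<in>J. W j) = 1"
  shows "(\<Sum>j\<in>J. \<Sum>l\<in>J. W j * W l * (u j \<bullet> u l) ^ k) \<ge> bm TYPE('n) k"
proof -
  have "(\<Sum>j\<in>J. \<Sum>l\<in>J. W j * W l * (u j \<bullet> u l) ^ k) - bm TYPE('n) k
    = (\<Sum>f\<in>words k.
        ((\<Sum>j\<in>J. W j * word_monomial k f (u j)) - (\<integral>y. word_monomial k f y \<partial>sphere_sigma))\<^sup>2)"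
    using assms by (rule weighted_gram_sum_minus_bm)
  also have "\<dots> \<ge> 0"
    by (intro sum_nonneg) simp
  finally show ?thesis
    by simp
qed

lemma weighted_gram_sum_eq_bm_iff:
  fixes u :: "nat \<Rightarrow> real^'n::finite"
  assumes "\<And>j. j \<in> J \<Longrightarrow> norm (u j) = 1" and "(\<Sum>j\<in>J. W j) = 1"
  shows "(\<Sum>j\<in>J. \<Sum>l\<in>J. W j * W l * (u j \<bullet> u l) ^ k) = bm TYPE('n) k
    \<longleftrightarrow> (\<forall>p\<in>hom_polys k. quadrature_exact J u W p)"
proof -
  let ?G = "\<Sum>j\<in>J. \<Sum>l\<in>J. W j * W l * (u j \<bullet> u l) ^ k"
  let ?a = "\<lambda>f. \<Sum>j\<in>J. W j * word_monomial k f (u j)"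
  let ?c = "\<lambda>f. \<integral>y. word_monomial k f y \<partial>sphere_sigma"
  have gram: "?G - bm TYPE('n) k = (\<Sum>f\<in>words k. (?a f - ?c f)\<^sup>2)"
    using assms by (rule weighted_gram_sum_minus_bm)
  have "?G = bm TYPE('n) k \<longleftrightarrow> (\<Sum>f\<in>words k. (?a f - ?c f)\<^sup>2) = 0"
    unfolding gram[symmetric] by simp
  also have "\<dots> \<longleftrightarrow> (\<forall>f\<in>words k. ?c f = ?a f)"
    by (subst sum_nonneg_eq_0_iff) auto
  also have "\<dots> \<longleftrightarrow> (\<forall>p\<in>hom_polys k. quadrature_exact J u W p)"
    using quadrature_exact_hom_polys_iff[of k J u W] by (simp add: quadrature_exact_def)
  finally show ?thesis .
qed

lemma sum_norm_power_pos:
  fixes v :: "nat \<Rightarrow> real^'n::finite"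
  assumes "\<exists>j<n. v j \<noteq> 0"
  shows "(\<Sum>l<n. norm (v l) ^ m) > 0"
proof -
  obtain j where "j < n" "v j \<noteq> 0"
    using assms by blast
  then have "0 < norm (v j) ^ m" and "norm (v j) ^ m \<le> (\<Sum>l<n. norm (v l) ^ m)"
    by (auto intro: member_le_sum)
  then show ?thesis
    by linarith
qed

lemma sum_mweight:
  fixes v :: "nat \<Rightarrow> real^'n::finite"
  assumes "m \<ge> 1" and "\<exists>j<n. v j \<noteq> 0"
  shows "(\<Sum>j\<in>{j. j < n \<and> v j \<noteq> 0}. mweight m v n j) = 1"
proof -
  have "(\<Sum>j\<in>{j. j < n \<and> v j \<noteq> 0}. norm (v j) ^ m) = (\<Sum>l<n. norm (v l) ^ m)"
    using assms(1) by (intro sum.mono_neutral_left) auto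
  then show ?thesis
    using sum_norm_power_pos[OF assms(2), of m]
    by (simp add: mweight_def flip: sum_divide_distrib)
qed

lemma gram_sum_normalize:
  fixes v :: "nat \<Rightarrow> real^'n::finite"
  assumes "m \<ge> 1" "k \<le> m" "\<exists>j<n. v j \<noteq> 0"
  defines "J \<equiv> {j. j < n \<and> v j \<noteq> 0}" and "u \<equiv> \<lambda>j. v j /\<^sub>R norm (v j)"
  shows "(\<Sum>j<n. \<Sum>l<n. (norm (v j) * norm (v l)) ^ (m - k) * (v j \<bullet> v l) ^ k)
    = (\<Sum>l<n. norm (v l) ^ m)\<^sup>2 * (\<Sum>j\<in>J. \<Sum>l\<in>J. mweight m v n j * mweight m v n l * (u j \<bullet> u l) ^ k)"
proof -
  define S where "S = (\<Sum>l<n. norm (v l) ^ m)"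
  have S: "S > 0"
    unfolding S_def using assms(3) by (rule sum_norm_power_pos)
  let ?g = "\<lambda>j l. (norm (v j) * norm (v l)) ^ (m - k) * (v j \<bullet> v l) ^ k"
  have "(\<Sum>j<n. \<Sum>l<n. ?g j l) = (\<Sum>j<n. \<Sum>l\<in>J. ?g j l)"
    using assms(1) by (intro sum.cong refl sum.mono_neutral_right) (auto simp: J_def)
  also have "\<dots> = (\<Sum>j\<in>J. \<Sum>l\<in>J. ?g j l)"
    using assms(1) by (intro sum.mono_neutral_right) (auto simp: J_def intro!: sum.neutral)
  also have "\<dots> = (\<Sum>j\<in>J. \<Sum>l\<in>J. S\<^sup>2 * (mweight m v n j * mweight m v n l * (u j \<bullet> u l) ^ k))"
  proof (intro sum.cong refl)
    fix j l assume "j \<in> J" "l \<in> J"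
    then have inner: "v j \<bullet> v l = norm (v j) * norm (v l) * (u j \<bullet> u l)"
      by (simp add: J_def u_def field_simps)
    have weight: "mweight m v n i * S = norm (v i) ^ m" for i
      using S by (simp add: mweight_def S_def)
    have "S\<^sup>2 * (mweight m v n j * mweight m v n l * (u j \<bullet> u l) ^ k)
        = (mweight m v n j * S) * (mweight m v n l * S) * (u j \<bullet> u l) ^ k"
      by (simp add: power2_eq_square mult_ac)
    also have "\<dots> = (norm (v j) * norm (v l)) ^ ((m - k) + k) * (u j \<bullet> u l) ^ k"
      using assms(2) by (simp add: weight power_mult_distrib)
    also have "\<dots> = (norm (v j) * norm (v l)) ^ (m - k) * (v j \<bullet> v l) ^ k"
      by (simp add: inner power_add power_mult_distrib)
    finally show "(norm (v j) * norm (v l)) ^ (m - k) * (v j \<bullet> v l) ^ k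
        = S\<^sup>2 * (mweight m v n j * mweight m v n l * (u j \<bullet> u l) ^ k)" ..
  qed
  finally show ?thesis
    by (simp add: S_def sum_distrib_left)
qed

theorem theorem4p7:
  fixes v :: "nat \<Rightarrow> real^'d" and n m :: nat
  assumes "m \<ge> 1" and "CARD('d) \<ge> 2" and "\<exists>j<n. v j \<noteq> 0"
  shows "(\<Sum>j<n. \<Sum>k<n. (v j \<bullet> v k) ^ m) \<ge> bm TYPE('d) m * (\<Sum>l<n. norm (v l) ^ m)\<^sup>2
    \<and> ((\<Sum>j<n. \<Sum>k<n. (v j \<bullet> v k) ^ m) = bm TYPE('d) m * (\<Sum>l<n. norm (v l) ^ m)\<^sup>2
           \<longleftrightarrow> weighted_design m v n (hom_polys m))
    \<and> (weighted_design m v n (polys_upto m)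
           \<longleftrightarrow> ((\<Sum>j<n. \<Sum>k<n. (v j \<bullet> v k) ^ m) = bm TYPE('d) m * (\<Sum>l<n. norm (v l) ^ m)\<^sup>2
                \<and> (\<Sum>j<n. \<Sum>k<n. norm (v j) * norm (v k) * (v j \<bullet> v k) ^ (m - 1))
                    = bm TYPE('d) (m - 1) * (\<Sum>l<n. norm (v l) ^ m)\<^sup>2))"
proof -
  define J where "J = {j. j < n \<and> v j \<noteq> 0}"
  define u where "u j = v j /\<^sub>R norm (v j)" for j
  define S where "S = (\<Sum>l<n. norm (v l) ^ m)"
  let ?G = "\<lambda>k. \<Sum>j\<in>J. \<Sum>l\<in>J. mweight m v n j * mweight m v n l * (u j \<bullet> u l) ^ k"
  have unit: "\<And>j. j \<in> J \<Longrightarrow> norm (u j) = 1"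
    by (simp add: J_def u_def)
  have weights: "(\<Sum>j\<in>J. mweight m v n j) = 1"
    unfolding J_def using assms(1,3) by (rule sum_mweight)
  have "S\<^sup>2 > 0"
    unfolding S_def using sum_norm_power_pos[OF assms(3), of m] by simp
  moreover have "(\<Sum>j<n. \<Sum>k<n. (v j \<bullet> v k) ^ m) = S\<^sup>2 * ?G m"
    using gram_sum_normalize[OF assms(1) order_refl assms(3)] by (simp add: S_def J_def u_def)
  moreover have "(\<Sum>j<n. \<Sum>k<n. norm (v j) * norm (v k) * (v j \<bullet> v k) ^ (m - 1)) = S\<^sup>2 * ?G (m - 1)"
    using gram_sum_normalize[OF assms(1) diff_le_self[of m 1] assms(3)] assms(1)
    by (simp add: S_def J_def u_def)
  moreover have "weighted_design m v n P \<longleftrightarrow> (\<forall>p\<in>P. quadrature_exact J u (mweight m v n) p)" for P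
    by (simp add: weighted_design_def quadrature_exact_def J_def u_def)
  moreover have "?G m \<ge> bm TYPE('d) m"
    using unit weights by (rule weighted_gram_sum_ge_bm)
  moreover note weighted_gram_sum_eq_bm_iff[of J u "mweight m v n", OF unit weights]
    quadrature_exact_polys_upto_iff[of J u m "mweight m v n", OF unit assms(1)]
  ultimately show ?thesis
    unfolding S_def[symmetric] by (simp add: mult.commute[of "bm TYPE('d) _"])
qed

end
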